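(* Let $k\ge1$ and $r\ge0$ be integers, and let $\mathcal{C}$ be a multiset of $2^k+r$ non-zero residues modulo $2^{k+1}$ such that no sub-collection sums to $2^k$ modulo $2^{k+1}$, and such that for no odd $\lambda$ can $\lambda\cdot\mathcal{C}$ be type 1 compressed. Then at least one of the following holds: $\mathcal{C}$ contains at least $2^{k-1}+r$ even residues; or there is an odd residue $t$ modulo $2^{k+1}$ such that $\mathcal{C}$ contains at least $2^{k-1}+r$ elements each lying in $\{t,-t,2^k-t,-(2^k-t)\}$; or there are three elements $x_1,x_2,x_3$ of $\mathcal{C}$ (three distinct members of the multiset) with $|\{x_1,x_2,x_3\}^*|\ge6$.
   Context: For a multiset $\mathcal{D}=\{a_1,\dots,a_d\}$ of residues modulo $2^{k+1}$, $\mathcal{D}^*=\{\sum_{i\in I}a_i \bmod 2^{k+1}: I\subseteq[d]\}$ (including $0$). $\lambda\cdot\mathcal{C}=\{\lambda c:c\in\mathcal{C}\}$. For a residue $t$, $|t|$ is the minimal absolute value of an integer in its residue class. A multiset $\mathcal{D}$ can be type 1 compressed if for some $\lambda>0$ it contains at least $\lambda$ elements each equal to $\pm1$ and also an element $t$ with $1<|t|\le\lambda+1$. *)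

theory Defs
  imports Main "HOL-Library.Multiset"
begin

text \<open>Residues modulo m are represented by integers; all notions below only depend
  on the residue classes modulo m.\<close>

definition absres :: "int \<Rightarrow> int \<Rightarrow> int" where
  "absres m t = min (t mod m) (m - t mod m)"

definition subsums :: "int \<Rightarrow> int multiset \<Rightarrow> int set" where
  "subsums m D = {sum_mset S mod m | S. S \<subseteq># D}"

definition scale_res :: "int \<Rightarrow> int \<Rightarrow> int multiset \<Rightarrow> int multiset" where
  "scale_res m l C = image_mset (\<lambda>c. (l * c) mod m) C"

definition type1_compressible :: "int \<Rightarrow> int multiset \<Rightarrow> bool" where
  "type1_compressible m D \<longleftrightarrow>
     (\<exists>l::nat. l > 0 \<and>
        l \<le> size (filter_mset (\<lambda>x. x mod m = 1 mod m \<or> x mod m = (-1) mod m) D) \<and>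
        (\<exists>t\<in>#D. 1 < absres m t \<and> absres m t \<le> int l + 1))"

end

theory Submission
  imports Defs
begin

(* Suppose every three elements x, y, z of C have fewer than six subset sums modulo
   M = 2^(k+1), and let h = 2^k. If y is not congruent to +-x, the subset sums
   S = {0, x, y, x + y} of {x, y} are four distinct residues, and as S united with z + S has
   fewer than six elements, translation by z maps three elements of S back into S. Since z
   is neither 0 nor h, S then contains a progression s, s + z, s + 2z of three distinct
   terms, and the few possible positions of such a progression force y = +-2x and z = +-x,
   or x = +-2y and z = +-y. The two doublings cannot hold simultaneously, since M is prime
   to 3 and 5. Hence, for fixed x and y not congruent to +-x, either all remaining elements
   are +-x or all are +-y, so all elements of C but at most one lie in a single class
   {w, -w}. Such a class consists of even residues or of odd residues +-t, and it has at
   least 2^k + r - 1 >= 2^(k-1) + r elements. *)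

lemma size_filter_mset_mono:
  assumes "\<And>x. x \<in># A \<Longrightarrow> P x \<Longrightarrow> Q x"
  shows "size (filter_mset P A) \<le> size (filter_mset Q A)"
  using filter_mset_mono_strong[OF subset_mset.order_refl assms] by (rule size_mset_mono)

lemma ex_related_to_all_but_one:
  fixes C :: "'a multiset" and Q R :: "'a \<Rightarrow> 'a \<Rightarrow> bool"
  assumes "C \<noteq> {#}" and Q_refl: "\<And>x. Q x x"
    and triple: "\<And>x y z. {#x, y, z#} \<subseteq># C \<Longrightarrow> \<not> Q x y \<Longrightarrow>
      R x y \<and> Q x z \<or> R y x \<and> Q y z"
    and not_mutual: "\<And>x y. x \<in># C \<Longrightarrow> y \<in># C \<Longrightarrow> R x y \<Longrightarrow> R y x \<Longrightarrow> False"
  shows "\<exists>w\<in>#C. size C \<le> size (filter_mset (Q w) C) + 1"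
proof -
  obtain x D where C: "C = add_mset x D"
    using assms(1) by (metis multiset_cases)
  show ?thesis
  proof (cases "\<forall>y\<in>#D. Q x y")
    case True
    then have "filter_mset (Q x) C = C"
      using Q_refl by (auto simp: C filter_mset_eq_conv)
    then show ?thesis by (auto simp: C)
  next
    case False
    then obtain y E where D: "D = add_mset y E" and "\<not> Q x y"
      by (metis multi_member_split)
    have C_xyE: "C = add_mset x (add_mset y E)" using C D by simp
    have E_cases: "R x y \<and> Q x z \<or> R y x \<and> Q y z" if "z \<in># E" for z
      using triple[OF _ \<open>\<not> Q x y\<close>] that
      by (simp add: C_xyE mset_subset_eq_add_mset_cancel)
    have all_related: "\<exists>w\<in>#C. size C \<le> size (filter_mset (Q w) C) + 1"
      if "w \<in> {x, y}" "\<forall>z\<in>#E. Q w z" for w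
    proof -
      have "filter_mset (Q w) E = E" using that(2) by (simp add: filter_mset_eq_conv)
      then have "size C \<le> size (filter_mset (Q w) C) + 1"
        using that(1) Q_refl by (auto simp: C_xyE)
      with that(1) show ?thesis by (auto simp: C_xyE)
    qed
    show ?thesis
    proof (cases "R x y \<or> R y x")
      case True
      then have "(\<forall>z\<in>#E. Q x z) \<or> (\<forall>z\<in>#E. Q y z)"
        using E_cases not_mutual[of x y] by (auto simp: C_xyE)
      then show ?thesis using all_related[of x] all_related[of y] by blast
    next
      case False
      then have "E = {#}" using E_cases by (metis multiset_cases union_single_eq_member)
      then show ?thesis using all_related[of x] by simp
    qed
  qed
qed

lemma two_steps_inside_if_small_Un_image:
  assumes "finite S" "inj_on f S" "2 * card (S \<union> f ` S) < 3 * card S"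
  shows "\<exists>s\<in>S. f s \<in> S \<and> f (f s) \<in> S"
proof -
  define A where "A = {s \<in> S. f s \<in> S}"
  have "A \<subseteq> S" "f ` A \<subseteq> S" "S \<inter> f ` S = f ` A" by (auto simp: A_def)
  have card_fA: "card (f ` A) = card A"
    using \<open>A \<subseteq> S\<close> assms(2) by (intro card_image) (rule inj_on_subset)
  have "card (S \<union> f ` S) + card (f ` A) = card S + card (f ` S)"
    using card_Un_Int[of S "f ` S"] assms(1) \<open>S \<inter> f ` S = f ` A\<close> by simp
  with assms(2,3) card_fA have "card S < card A + card (f ` A)"
    by (simp add: card_image)
  moreover have "card (A \<union> f ` A) \<le> card S"
    using \<open>A \<subseteq> S\<close> \<open>f ` A \<subseteq> S\<close> assms(1) by (intro card_mono) auto
  ultimately have "A \<inter> f ` A \<noteq> {}"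
    using card_Un_disjoint[of A "f ` A"] \<open>A \<subseteq> S\<close> assms(1) finite_subset by fastforce
  then show ?thesis by (auto simp: A_def)
qed

lemma mod_eq_if_less_double:
  fixes x m :: int
  assumes "0 \<le> x" "x < 2 * m"
  shows "x mod m = (if x < m then x else x - m)"
proof (cases "x < m")
  case False
  then have "x mod m = (x - m) mod m" using assms by (intro mod_pos_geq) auto
  also have "\<dots> = x - m" using assms False by (intro mod_pos_pos_trivial) auto
  finally show ?thesis using False by simp
qed (use assms in simp)

lemma subsums_empty [simp]: "subsums m {#} = {0}"
  unfolding subsums_def by auto

lemma subsums_add_mset:
  "subsums m (add_mset x X) = subsums m X \<union> (\<lambda>s. (x + s) mod m) ` subsums m X"
proof (intro equalityI subsetI)
  fix u assume "u \<in> subsums m (add_mset x X)"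
  then obtain S where S: "S \<subseteq># add_mset x X" "u = sum_mset S mod m"
    unfolding subsums_def by blast
  show "u \<in> subsums m X \<union> (\<lambda>s. (x + s) mod m) ` subsums m X"
  proof (cases "x \<in># S")
    case True
    then obtain S' where "S = add_mset x S'" by (metis multi_member_split)
    with S have "S' \<subseteq># X" "u = (x + sum_mset S' mod m) mod m"
      by (auto simp: mod_add_right_eq mset_subset_eq_add_mset_cancel)
    then show ?thesis unfolding subsums_def by blast
  next
    case False
    with S have "S \<subseteq># X" by (metis Diff_eq_empty_iff_mset minus_add_mset_if_not_in_lhs)
    with S show ?thesis unfolding subsums_def by blast
  qed
next
  fix u assume "u \<in> subsums m X \<union> (\<lambda>s. (x + s) mod m) ` subsums m X"
  then show "u \<in> subsums m (add_mset x X)"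
  proof
    assume "u \<in> subsums m X"
    then show ?thesis unfolding subsums_def using subset_mset.order_trans by fastforce
  next
    assume "u \<in> (\<lambda>s. (x + s) mod m) ` subsums m X"
    then obtain S where "S \<subseteq># X" "u = (x + sum_mset S mod m) mod m"
      unfolding subsums_def by blast
    then have "add_mset x S \<subseteq># add_mset x X" "u = sum_mset (add_mset x S) mod m"
      by (auto simp: mod_add_right_eq mset_subset_eq_add_mset_cancel)
    then show ?thesis unfolding subsums_def by blast
  qed
qed

lemma subsums_pair:
  fixes a b m :: int
  assumes "0 \<le> a" "a < m" "0 \<le> b" "b < m"
  shows "subsums m {#a, b#} = {0, a, b, (a + b) mod m}"
  using assms by (auto simp: subsums_add_mset mod_add_right_eq)

definition cong_pm :: "int \<Rightarrow> int \<Rightarrow> int \<Rightarrow> bool" where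
  "cong_pm m x y \<longleftrightarrow> y mod m = x mod m \<or> y mod m = (- x) mod m"

lemma cong_pm_refl [simp]: "cong_pm m x x"
  by (simp add: cong_pm_def)

lemma cong_pm_residue_iff:
  fixes m x y :: int
  assumes "0 < y" "y < m"
  shows "cong_pm m x y \<longleftrightarrow> y = x mod m \<or> y + x mod m = m"
  using assms by (auto simp: cong_pm_def zmod_zminus1_eq_if)

lemma cong_pm_even_iff:
  fixes m x y :: int
  assumes "even m" "cong_pm m x y"
  shows "even y \<longleftrightarrow> even x"
proof -
  have "y mod m mod 2 = x mod m mod 2 \<or> y mod m mod 2 = (- x) mod m mod 2"
    using assms(2) by (auto simp: cong_pm_def)
  then have "y mod 2 = x mod 2 \<or> y mod 2 = (- x) mod 2"
    using assms(1) by (simp add: mod_mod_cancel)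
  then show ?thesis by (metis even_iff_mod_2_eq_zero even_minus)
qed

lemma cong_pm_double_not_mutual:
  fixes a b m :: int
  assumes "coprime m 15" "0 < a" "a < m"
    and "cong_pm m (2 * a) b" "cong_pm m (2 * b) a"
  shows False
proof -
  have "m dvd b - 2 * a \<or> m dvd b + 2 * a" "m dvd a - 2 * b \<or> m dvd a + 2 * b"
    using assms(4,5) by (simp_all add: cong_pm_def mod_eq_dvd_iff)
  then have "m dvd 15 * a"
    by (elim disjE) algebra+
  then have "m dvd a"
    using assms(1) by (simp add: coprime_dvd_mult_right_iff)
  with assms(2,3) show False by (auto dest: zdvd_imp_le)
qed

lemma progression_in_subsums_pair:
  fixes a b c s m :: int
  assumes "0 < a" "a < m" "0 < b" "b < m" "0 < c" "c < m" "2 * c \<noteq> m"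
    and "\<not> cong_pm m a b"
    and "s \<in> subsums m {#a, b#}" "(c + s) mod m \<in> subsums m {#a, b#}"
      "(c + (c + s) mod m) mod m \<in> subsums m {#a, b#}"
  shows "cong_pm m (2 * a) b \<and> cong_pm m a c \<or> cong_pm m (2 * b) a \<and> cong_pm m b c"
proof -
  define ab where "ab = (a + b) mod m"
  define t where "t = (c + s) mod m"
  define u where "u = (c + t) mod m"
  define a2 where "a2 = (2 * a) mod m"
  define b2 where "b2 = (2 * b) mod m"
  have S: "subsums m {#a, b#} = {0, a, b, ab}"
    using assms(1-4) by (simp add: subsums_pair ab_def)
  have "0 \<le> s" "s < m" using assms(9) assms(1-4) by (auto simp: S ab_def)
  moreover have "0 \<le> t" "t < m" using assms(1,2) by (simp_all add: t_def)
  ultimately have lin: "ab = (if a + b < m then a + b else a + b - m)"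
      "t = (if c + s < m then c + s else c + s - m)"
      "u = (if c + t < m then c + t else c + t - m)"
      "a2 = (if 2 * a < m then 2 * a else 2 * a - m)"
      "b2 = (if 2 * b < m then 2 * b else 2 * b - m)"
    using assms(1-6) unfolding ab_def t_def u_def a2_def b2_def
    by (simp_all add: mod_eq_if_less_double)
  have "b \<noteq> a" "b + a \<noteq> m"
    using assms(8) assms(1-4) by (simp_all add: cong_pm_residue_iff)
  moreover have "s = 0 \<or> s = a \<or> s = b \<or> s = ab" "t = 0 \<or> t = a \<or> t = b \<or> t = ab"
      "u = 0 \<or> u = a \<or> u = b \<or> u = ab"
    using assms(9-11) by (simp_all add: S t_def u_def)
  \<comment> \<open>All residues are now explicit integers in [0, m), so the case analysis over the
    positions of the progression s, t, u in {0, a, b, ab} is linear arithmetic.\<close>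
  ultimately have "(b = a2 \<or> b + a2 = m) \<and> (c = a \<or> c + a = m) \<or>
      (a = b2 \<or> a + b2 = m) \<and> (c = b \<or> c + b = m)"
    using assms(1-7) lin by smt
  then show ?thesis
    using assms(1-6) by (simp add: cong_pm_residue_iff a2_def b2_def)
qed

lemma small_subsums_of_three:
  fixes x y z m :: int
  assumes "0 < x" "x < m" "0 < y" "y < m" "0 < z" "z < m" "2 * z \<noteq> m"
    and "\<not> cong_pm m x y" and "card (subsums m {#x, y, z#}) < 6"
  shows "cong_pm m (2 * x) y \<and> cong_pm m x z \<or> cong_pm m (2 * y) x \<and> cong_pm m y z"
proof -
  define S where "S = subsums m {#x, y#}"
  define f where "f s = (z + s) mod m" for s
  have S_eq: "S = {0, x, y, (x + y) mod m}"
    using assms(1-4) by (simp add: S_def subsums_pair)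
  have "subsums m {#x, y, z#} = S \<union> f ` S"
    by (simp add: S_def add_mset_commute[of _ z] subsums_add_mset f_def)
  have "card S = 4"
    using assms(1-4,8) by (auto simp: S_eq cong_pm_residue_iff mod_eq_if_less_double)
  have "S \<subseteq> {0..<m}"
    using assms(1-4) by (auto simp: S_eq)
  have "inj_on f S"
  proof (rule inj_onI)
    fix s s' assume "s \<in> S" "s' \<in> S" "f s = f s'"
    then have "s mod m = s' mod m" unfolding f_def by (simp add: mod_eq_dvd_iff)
    with \<open>s \<in> S\<close> \<open>s' \<in> S\<close> \<open>S \<subseteq> {0..<m}\<close> show "s = s'"
      by (metis atLeastLessThan_iff mod_pos_pos_trivial subsetD)
  qed
  moreover have "2 * card (S \<union> f ` S) < 3 * card S"
    using assms(9) \<open>card S = 4\<close> \<open>subsums m {#x, y, z#} = S \<union> f ` S\<close> by simp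
  ultimately obtain s where "s \<in> S" "f s \<in> S" "f (f s) \<in> S"
    using two_steps_inside_if_small_Un_image[of S f] by (auto simp: S_eq)
  then show ?thesis
    using progression_in_subsums_pair[of x m y z s] assms(1-8) by (simp add: S_def f_def)
qed

lemma ex_cong_pm_all_but_one_if_small_triples:
  fixes C :: "int multiset" and m :: int
  assumes "coprime m 15" "C \<noteq> {#}"
    and residue: "\<And>x. x \<in># C \<Longrightarrow> 0 < x \<and> x < m \<and> 2 * x \<noteq> m"
    and small: "\<And>X. X \<subseteq># C \<Longrightarrow> size X = 3 \<Longrightarrow> card (subsums m X) < 6"
  shows "\<exists>w\<in>#C. size C \<le> size (filter_mset (cong_pm m w) C) + 1"
proof (rule ex_related_to_all_but_one)
  fix x y z assume xyz: "{#x, y, z#} \<subseteq># C" and "\<not> cong_pm m x y"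
  then have "x \<in># C" "y \<in># C" "z \<in># C" by (auto dest: mset_subset_eqD)
  then show "cong_pm m (2 * x) y \<and> cong_pm m x z \<or> cong_pm m (2 * y) x \<and> cong_pm m y z"
    using residue[of x] residue[of y] residue[of z] \<open>\<not> cong_pm m x y\<close> small[OF xyz]
    by (intro small_subsums_of_three) auto
next
  fix x y assume "x \<in># C" "cong_pm m (2 * x) y" "cong_pm m (2 * y) x"
  with residue[of x] show False using cong_pm_double_not_mutual[OF assms(1)] by blast
qed (use assms(2) in simp_all)

theorem lemma3p8:
  fixes k r :: nat and C :: "int multiset"
  defines "M \<equiv> (2::int) ^ (k + 1)"
  assumes k: "k \<ge> 1"
    and size_C: "size C = 2 ^ k + r"
    and nonzero: "\<forall>x\<in>#C. 0 < x \<and> x < M"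
    and no_half: "\<forall>S. S \<subseteq># C \<longrightarrow> sum_mset S mod M \<noteq> 2 ^ k"
    and no_compress: "\<forall>l::int. odd l \<longrightarrow> \<not> type1_compressible M (scale_res M l C)"
  shows "size (filter_mset even C) \<ge> 2 ^ (k - 1) + r
       \<or> (\<exists>t::int. odd t \<and>
            size (filter_mset (\<lambda>x. x mod M \<in> {t mod M, (-t) mod M, (2^k - t) mod M,
                                               (-(2^k - t)) mod M}) C) \<ge> 2 ^ (k - 1) + r)
       \<or> (\<exists>X. X \<subseteq># C \<and> size X = 3 \<and> card (subsums M X) \<ge> 6)"
proof (cases "\<exists>X. X \<subseteq># C \<and> size X = 3 \<and> card (subsums M X) \<ge> 6")
  case False
  have M: "M = 2 * 2 ^ k" "even M" "coprime M 15"
    by (simp_all add: M_def coprime_power_left_iff)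
  have "0 < x \<and> x < M \<and> 2 * x \<noteq> M" if "x \<in># C" for x
  proof -
    have "{#x#} \<subseteq># C" using that by simp
    with no_half have "x mod M \<noteq> 2 ^ k" by fastforce
    with M(1) nonzero that show ?thesis by auto
  qed
  moreover have "C \<noteq> {#}" using size_C by auto
  moreover have "card (subsums M X) < 6" if "X \<subseteq># C" "size X = 3" for X
    using False that by auto
  ultimately obtain w where "size C \<le> size (filter_mset (cong_pm M w) C) + 1"
    using ex_cong_pm_all_but_one_if_small_triples[OF M(3)] by blast
  moreover have "2 ^ (k - 1) + 1 \<le> (2::nat) ^ k"
    using k by (cases k) auto
  ultimately have many: "2 ^ (k - 1) + r \<le> size (filter_mset (cong_pm M w) C)"
    using size_C by linarith
  show ?thesis
  proof (cases "odd w")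
    case True
    have "size (filter_mset (cong_pm M w) C) \<le> size (filter_mset (\<lambda>x. x mod M \<in>
        {w mod M, (-w) mod M, (2^k - w) mod M, (-(2^k - w)) mod M}) C)"
      by (rule size_filter_mset_mono) (auto simp: cong_pm_def)
    with True many show ?thesis by (meson order_trans)
  next
    case False
    have "size (filter_mset (cong_pm M w) C) \<le> size (filter_mset even C)"
    proof (rule size_filter_mset_mono)
      show "even x" if "cong_pm M w x" for x
        using cong_pm_even_iff[OF M(2) that] False by simp
    qed
    with many show ?thesis by simp
  qed
qed blast

end
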